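(* Let $X\in\mathbb{R}^{d\times n}$, $\rho>0$, and let $(\beta_k)_{k\ge0}$ be positive numbers with $\sum_k \frac{\beta_{k+1}}{\beta_k^2}<\infty$ and $\sum_k\frac{1}{\beta_k}<\infty$. Let $F(Z)=\log\det(I+Z^TZ)$ for $Z\in\mathbb{R}^{n\times n}$ and $$L(Z,W,Y,\beta)=F(Z)+\rho\|X-XW\|_F^2+\frac{\beta}{2}\|Z-W\|_F^2+\mathrm{Tr}(Y^T(Z-W)).$$ Let $Z_0\in\mathbb{R}^{n\times n}$, $Y_0=0$, and for $k\ge 0$ define $W_{k+1}=(\beta_k I+2\rho X^TX)^{-1}(2\rho X^TX+Y_k+\beta_k Z_k)$ (the minimizer of $W\mapsto L(Z_k,W,Y_k,\beta_k)$), let $Z_{k+1}$ be a global minimizer of $Z\mapsto L(Z,W_{k+1},Y_k,\beta_k)$, and set $Y_{k+1}=Y_k+\beta_k(Z_{k+1}-W_{k+1})$. Then the sequences $\{W_k\}$ and $\{Z_k\}$ are bounded.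
   Context: $I$ is the $n\times n$ identity matrix, $\|\cdot\|_F$ the Frobenius norm, $\mathrm{Tr}$ the trace. *)

theory Defs
  imports "HOL-Analysis.Analysis"
begin

definition frob_norm :: "real^'c^'r \<Rightarrow> real" where
  "frob_norm A = sqrt (\<Sum>i\<in>UNIV. \<Sum>j\<in>UNIV. (A $ i $ j)^2)"

definition logdetF :: "real^'n^'n \<Rightarrow> real" where
  "logdetF Z = ln (det (mat 1 + transpose Z ** Z))"

definition augL :: "real \<Rightarrow> real^'n^'d \<Rightarrow> real^'n^'n \<Rightarrow> real^'n^'n \<Rightarrow> real^'n^'n \<Rightarrow> real \<Rightarrow> real" where
  "augL \<rho> X Z W Y \<beta> = logdetF Z + \<rho> * (frob_norm (X - X ** W))^2
     + \<beta> / 2 * (frob_norm (Z - W))^2 + trace (transpose Y ** (Z - W))"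

end

theory Submission
  imports Defs
begin

text \<open>
  \<open>F(Z) = log det (I + Z\<^sup>T Z)\<close> is the logarithm of the Gram determinant of the columns
  \<open>(e\<^sub>k, z\<^sub>k)\<close> of the stacked matrix \<open>[I; Z]\<close>. Splitting that determinant as the squared distance
  of one column to the span of the others times the Gram determinant of the others shows that
  changing column \<open>j\<close> by \<open>w\<close> multiplies it by at most \<open>(1 + |w|)\<^sup>2\<close>, so \<open>F\<close> is Lipschitz with
  constant \<open>2n\<close>, and that \<open>F(Z) \<ge> log (1 + |z\<^sub>j|\<^sup>2)\<close>.

  Comparing the minimiser \<open>Z\<^sub>k\<^sub>+\<^sub>1\<close> with the minimiser of the quadratic part of the
  \<open>Z\<close>-subproblem, the Lipschitz bound gives \<open>|Y\<^sub>k| \<le> 4n\<close> for all multipliers. With this bound the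
  augmented Lagrangian \<open>L(Z\<^sub>k, W\<^sub>k, Y\<^sub>k, \<beta>\<^sub>k)\<close> grows in each iteration by at most a multiple of
  \<open>\<beta>\<^sub>k\<^sub>+\<^sub>1 / \<beta>\<^sub>k\<^sup>2 + 1 / \<beta>\<^sub>k\<close>, a summable sequence, so it is bounded above. Hence \<open>F(Z\<^sub>k)\<close> is
  bounded, which bounds \<open>Z\<^sub>k\<close>, and \<open>W\<^sub>k\<^sub>+\<^sub>1 = Z\<^sub>k\<^sub>+\<^sub>1 - (Y\<^sub>k\<^sub>+\<^sub>1 - Y\<^sub>k) / \<beta>\<^sub>k\<close> is bounded as well.
\<close>

definition gram_det :: "('i::finite \<Rightarrow> 'a::real_inner) \<Rightarrow> real" where
  "gram_det v = det (\<chi> i k. v i \<bullet> v k :: real^'i^'i)"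

text \<open>The Gram determinant of the family without \<open>v j\<close>, kept as an \<open>'i \<times> 'i\<close> determinant by
  replacing row and column \<open>j\<close> with those of the identity.\<close>
definition gram_minor :: "'i::finite \<Rightarrow> ('i \<Rightarrow> 'a::real_inner) \<Rightarrow> real" where
  "gram_minor j v =
     det (\<chi> i k. if i = j \<or> k = j then (if i = k then 1 else 0) else v i \<bullet> v k :: real^'i^'i)"

lemma matrix_eqI: "(\<And>i k. A $ i $ k = B $ i $ k) \<Longrightarrow> A = B"
  by (simp add: vec_eq_iff)

lemma gram_det_add_multiple:
  fixes v :: "'i::finite \<Rightarrow> 'a::real_inner"
  assumes "m \<noteq> j"
  shows "gram_det (v(j := v j + c *\<^sub>R v m)) = gram_det v"
proof -
  let ?G = "\<chi> i k. v i \<bullet> v k :: real^'i^'i"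
  let ?R = "\<chi> i. if i = j then row j ?G + c *s row m ?G else row i ?G"
  let ?C = "\<chi> i. if i = j then row j (transpose ?R) + c *s row m (transpose ?R)
                  else row i (transpose ?R)"
  \<comment> \<open>the new Gram matrix arises from the old one by the same row and then column operation\<close>
  have eq: "transpose ?C = (\<chi> i k. (v(j := v j + c *\<^sub>R v m)) i \<bullet> (v(j := v j + c *\<^sub>R v m)) k)"
  proof (rule matrix_eqI)
    fix i k
    show "transpose ?C $ i $ k = (\<chi> i k. (v(j := v j + c *\<^sub>R v m)) i \<bullet> (v(j := v j + c *\<^sub>R v m)) k) $ i $ k"
      using assms by (cases "i = j"; cases "k = j")
        (simp_all add: transpose_def row_def inner_add_left inner_add_right inner_commute algebra_simps)
  qed
  have "det ?C = det (transpose ?R)"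
    by (rule det_row_operation) (use assms in auto)
  moreover have "det ?R = det ?G"
    by (rule det_row_operation) (use assms in auto)
  ultimately show ?thesis
    by (simp only: gram_det_def eq[symmetric] det_transpose)
qed

lemma gram_det_add_span:
  fixes v :: "'i::finite \<Rightarrow> 'a::real_inner"
  assumes "r \<in> span (v ` (UNIV - {j}))"
  shows "gram_det (v(j := v j + r)) = gram_det v"
  using assms
proof (induction rule: span_induct_alt)
  case (step c x r)
  then obtain m where m: "m \<noteq> j" "x = v m" by auto
  let ?v = "v(j := v j + r)"
  have "v(j := v j + (c *\<^sub>R x + r)) = ?v(j := ?v j + c *\<^sub>R ?v m)"
    using m by (auto simp: algebra_simps)
  then show ?case by (simp only: gram_det_add_multiple[OF m(1)] step.IH)
qed simp

lemma gram_minor_fun_upd [simp]: "gram_minor j (v(j := u)) = gram_minor j v"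
  unfolding gram_minor_def by (rule arg_cong[where f = det]) (simp add: vec_eq_iff)

lemma gram_det_orthogonal_update:
  fixes v :: "'i::finite \<Rightarrow> 'a::real_inner"
  assumes "\<And>k. k \<noteq> j \<Longrightarrow> p \<bullet> v k = 0"
  shows "gram_det (v(j := p)) = (p \<bullet> p) * gram_minor j v"
proof -
  define b where "b i = (\<chi> k. if i = j \<or> k = j then (if i = k then 1 else 0) else v i \<bullet> v k)"
    for i :: 'i
  have "(\<chi> i k. (v(j := p)) i \<bullet> (v(j := p)) k) = (\<chi> i. if i = j then (p \<bullet> p) *s b j else b i)"
    using assms by (auto simp: vec_eq_iff b_def inner_commute)
  moreover have "(\<chi> i. if i = j then b j else b i) = (\<chi> i. b i)"
    by (simp add: vec_eq_iff)
  ultimately show ?thesis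
    using det_row_mul[of j "p \<bullet> p" "\<lambda>i. b j" b]
    unfolding gram_det_def gram_minor_def b_def by simp
qed

lemma gram_det_eq_orthogonal_component:
  fixes v :: "'i::finite \<Rightarrow> 'a::real_inner"
  assumes "y \<in> span (v ` (UNIV - {j}))" "\<And>k. k \<noteq> j \<Longrightarrow> z \<bullet> v k = 0" "v j = y + z"
  shows "gram_det v = (z \<bullet> z) * gram_minor j v"
proof -
  have "v ` (UNIV - {j}) = (v(j := z)) ` (UNIV - {j})" by auto
  then have "gram_det ((v(j := z))(j := z + y)) = gram_det (v(j := z))"
    using gram_det_add_span[of y "v(j := z)" j] assms(1) by simp
  moreover have "(v(j := z))(j := z + y) = v" using assms(3) by (auto simp: add.commute)
  ultimately show ?thesis using gram_det_orthogonal_update[of j z v] assms(2) by simp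
qed

text \<open>Column \<open>k\<close> of the matrix obtained by stacking the identity on top of \<open>Z\<close>.\<close>
definition stack_columns :: "real^'n^'m \<Rightarrow> 'n \<Rightarrow> (real^'n) \<times> (real^'m)" where
  "stack_columns Z k = (axis k 1, column k Z)"

definition keep_columns :: "'n set \<Rightarrow> real^'n^'m \<Rightarrow> real^'n^'m" where
  "keep_columns S Z = (\<chi> r c. if c \<in> S then Z $ r $ c else 0)"

lemma keep_columns_keep_columns [simp]:
  "keep_columns S (keep_columns T Z) = keep_columns (S \<inter> T) Z"
  by (simp add: keep_columns_def vec_eq_iff)

lemma keep_columns_UNIV [simp]: "keep_columns UNIV Z = Z"
  by (simp add: keep_columns_def vec_eq_iff)

lemma gram_det_stack_columns:
  "gram_det (stack_columns Z) = det (mat 1 + transpose Z ** Z)"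
  unfolding gram_det_def matrix_mult_transpose_dot_column
  by (rule arg_cong[where f = det], rule matrix_eqI) (simp add: stack_columns_def inner_axis_axis mat_def)

lemma stack_columns_orthogonal_decomposition:
  fixes Z :: "real^'n^'m"
  obtains y z where "y \<in> span (stack_columns Z ` (UNIV - {j}))"
    and "\<And>k. k \<noteq> j \<Longrightarrow> z \<bullet> stack_columns Z k = 0"
    and "stack_columns Z j = y + z" and "1 \<le> norm z"
proof -
  obtain y z where y: "y \<in> span (stack_columns Z ` (UNIV - {j}))"
    and z: "\<And>w. w \<in> span (stack_columns Z ` (UNIV - {j})) \<Longrightarrow> z \<bullet> w = 0"
    and yz: "stack_columns Z j = y + z"
    using orthogonal_subspace_decomp_exists[of "stack_columns Z ` (UNIV - {j})" "stack_columns Z j"]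
    unfolding orthogonal_def by metis
  have "fst y $ j = 0"
    using y by (induction rule: span_induct_alt) (auto simp: stack_columns_def axis_def)
  then have "fst z $ j = 1"
    using arg_cong[where f = "\<lambda>p. fst p $ j", OF yz] by (simp add: stack_columns_def)
  then have "1 \<le> norm z"
    using component_le_norm_cart[of "fst z" j] norm_fst_le[of "fst z" "snd z"] by simp
  moreover have "z \<bullet> stack_columns Z k = 0" if "k \<noteq> j" for k
    by (rule z, rule span_base) (use that in auto)
  ultimately show thesis
    using y yz that by blast
qed

lemma gram_minor_stack_columns:
  fixes Z :: "real^'n^'m"
  shows "gram_minor j (stack_columns Z) = gram_det (stack_columns (keep_columns (- {j}) Z))"
proof -
  let ?p = "(axis j 1, 0) :: (real^'n) \<times> (real^'m)"
  have "stack_columns (keep_columns (- {j}) Z) = (stack_columns Z)(j := ?p)"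
    by (rule ext) (simp add: stack_columns_def keep_columns_def column_def vec_eq_iff)
  moreover have "gram_det ((stack_columns Z)(j := ?p)) = gram_minor j (stack_columns Z)"
    using gram_det_orthogonal_update[of j ?p "stack_columns Z"]
    by (simp add: stack_columns_def inner_axis_axis)
  ultimately show ?thesis by simp
qed

lemma gram_det_stack_columns_split:
  fixes Z :: "real^'n^'m"
  obtains c :: real where "1 \<le> c"
    and "gram_det (stack_columns Z) = c * gram_det (stack_columns (keep_columns (- {j}) Z))"
proof -
  obtain y z where "y \<in> span (stack_columns Z ` (UNIV - {j}))"
    and "\<And>k. k \<noteq> j \<Longrightarrow> z \<bullet> stack_columns Z k = 0"
    and "stack_columns Z j = y + z" and "1 \<le> norm z"
    using stack_columns_orthogonal_decomposition[of Z j] by blast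
  then show thesis
    using gram_det_eq_orthogonal_component[of y "stack_columns Z" j z]
    by (intro that[of "z \<bullet> z"]) (auto simp: gram_minor_stack_columns power2_norm_eq_inner[symmetric])
qed

lemma gram_det_stack_columns_ge_one: "1 \<le> gram_det (stack_columns Z)"
proof -
  have "1 \<le> gram_det (stack_columns (keep_columns S Z))" if "finite S" for S
    using that
  proof (induction S rule: finite_induct)
    case empty
    have "mat 1 + transpose (keep_columns {} Z) ** keep_columns {} Z = mat 1"
      by (rule matrix_eqI) (simp add: keep_columns_def matrix_matrix_mult_def transpose_def)
    then show ?case unfolding gram_det_stack_columns by simp
  next
    case (insert x S)
    obtain c where c: "1 \<le> c" and "gram_det (stack_columns (keep_columns (insert x S) Z))
        = c * gram_det (stack_columns (keep_columns (- {x}) (keep_columns (insert x S) Z)))"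
      by (rule gram_det_stack_columns_split[of "keep_columns (insert x S) Z" x])
    moreover have "keep_columns (- {x}) (keep_columns (insert x S) Z) = keep_columns S Z"
      using insert.hyps(2) by (auto simp: keep_columns_def vec_eq_iff)
    moreover have "1 * 1 \<le> c * gram_det (stack_columns (keep_columns S Z))"
      using c insert.IH by (intro mult_mono) linarith+
    ultimately show ?case by simp
  qed
  from this[of UNIV] show ?thesis by simp
qed

lemma gram_det_stack_keep_columns_le:
  "gram_det (stack_columns (keep_columns S Z)) \<le> gram_det (stack_columns Z)"
proof -
  have "gram_det (stack_columns (keep_columns (- A) Z)) \<le> gram_det (stack_columns Z)"
    if "finite A" for A
    using that
  proof (induction A rule: finite_induct)
    case (insert x A)
    obtain c where c: "1 \<le> c" and "gram_det (stack_columns (keep_columns (- A) Z))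
        = c * gram_det (stack_columns (keep_columns (- {x}) (keep_columns (- A) Z)))"
      by (rule gram_det_stack_columns_split[of "keep_columns (- A) Z" x])
    moreover have "keep_columns (- {x}) (keep_columns (- A) Z) = keep_columns (- insert x A) Z"
      by (auto simp: keep_columns_def vec_eq_iff)
    moreover have "1 * gram_det (stack_columns (keep_columns (- insert x A) Z))
        \<le> c * gram_det (stack_columns (keep_columns (- insert x A) Z))"
      using c gram_det_stack_columns_ge_one[of "keep_columns (- insert x A) Z"]
      by (intro mult_right_mono) linarith+
    ultimately show ?case
      using insert.IH by simp
  qed simp
  from this[of "- S"] show ?thesis by simp
qed

lemma gram_det_stack_single_column:
  "gram_det (stack_columns (keep_columns {j} Z)) = 1 + (norm (column j Z))\<^sup>2"
proof -
  have "column i (keep_columns {j} Z) = (if i = j then column j Z else 0)" for i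
    by (simp add: column_def keep_columns_def vec_eq_iff)
  then have "mat 1 + transpose (keep_columns {j} Z) ** keep_columns {j} Z
      = (\<chi> a b. if a = b then (if a = j then 1 + (norm (column j Z))\<^sup>2 else 1) else 0)"
    by (intro matrix_eqI) (simp add: matrix_mult_transpose_dot_column mat_def power2_norm_eq_inner)
  then show ?thesis
    by (simp add: gram_det_stack_columns det_diagonal prod.delta)
qed

lemma inner_self_add_le:
  fixes z z' :: "'a::real_inner"
  assumes "1 \<le> norm z" and "norm z' \<le> r"
  shows "(z + z') \<bullet> (z + z') \<le> (1 + r)\<^sup>2 * (z \<bullet> z)"
proof -
  have "0 \<le> r"
    using assms(2) norm_ge_zero[of z'] by linarith
  then have "r \<le> norm z * r"
    using mult_right_mono[OF assms(1)] by simp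
  then have "norm (z + z') \<le> norm z * (1 + r)"
    using norm_triangle_ineq[of z z'] assms(2) by (simp add: distrib_left)
  then have "(norm (z + z'))\<^sup>2 \<le> (norm z * (1 + r))\<^sup>2"
    by (simp add: power_mono)
  then show ?thesis
    by (simp add: power2_norm_eq_inner power_mult_distrib mult.commute)
qed

lemma gram_det_stack_change_column:
  fixes Z Z' :: "real^'n^'m"
  assumes "\<And>c. c \<noteq> j \<Longrightarrow> column c Z' = column c Z"
  shows "gram_det (stack_columns Z')
    \<le> (1 + norm (column j Z' - column j Z))\<^sup>2 * gram_det (stack_columns Z)"
proof -
  define w where "w = column j Z' - column j Z"
  let ?S = "span (stack_columns Z ` (UNIV - {j}))"
  obtain y z where y: "y \<in> ?S" and z: "\<And>k. k \<noteq> j \<Longrightarrow> z \<bullet> stack_columns Z k = 0"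
    and yz: "stack_columns Z j = y + z" and z1: "1 \<le> norm z"
    using stack_columns_orthogonal_decomposition[of Z j] by blast
  obtain y' z' where y': "y' \<in> ?S" and z': "\<And>u. u \<in> ?S \<Longrightarrow> z' \<bullet> u = 0"
    and yz': "(0, w) = y' + z'"
    using orthogonal_subspace_decomp_exists[of "stack_columns Z ` (UNIV - {j})" "(0, w)"]
    unfolding orthogonal_def by metis
  have Z': "stack_columns Z' = (stack_columns Z)(j := stack_columns Z j + (0, w))"
    using assms by (auto simp: stack_columns_def w_def)
  then have "stack_columns Z' ` (UNIV - {j}) = stack_columns Z ` (UNIV - {j})"
    by auto
  then have "gram_det (stack_columns Z') = ((z + z') \<bullet> (z + z')) * gram_minor j (stack_columns Z)"
    using gram_det_eq_orthogonal_component[of "y + y'" "stack_columns Z'" j "z + z'"]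
      y y' z z' yz yz' Z'
    by (auto simp: span_add span_base inner_add_left algebra_simps)
  moreover have "gram_det (stack_columns Z) = (z \<bullet> z) * gram_minor j (stack_columns Z)"
    using gram_det_eq_orthogonal_component[OF y z yz] .
  moreover have "0 \<le> gram_minor j (stack_columns Z)"
    using gram_det_stack_columns_ge_one[of "keep_columns (- {j}) Z"]
    by (simp add: gram_minor_stack_columns)
  moreover have "(z + z') \<bullet> (z + z') \<le> (1 + norm w)\<^sup>2 * (z \<bullet> z)"
  proof (rule inner_self_add_le[OF z1])
    have "(norm w)\<^sup>2 = (norm y')\<^sup>2 + (norm z')\<^sup>2"
      using norm_add_Pythagorean[of y' z'] z'[OF y'] yz'[symmetric]
      by (simp add: orthogonal_def inner_commute norm_Pair)
    then show "norm z' \<le> norm w"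
      by (simp add: power2_le_imp_le)
  qed
  ultimately show ?thesis
    unfolding w_def[symmetric]
    using mult_right_mono[of "(z + z') \<bullet> (z + z')" "(1 + norm w)\<^sup>2 * (z \<bullet> z)"]
    by (simp add: mult.assoc)
qed

lemma logdetF_eq_ln_gram_det: "logdetF Z = ln (gram_det (stack_columns Z))"
  unfolding logdetF_def gram_det_stack_columns ..

lemma one_add_norm_column_sq_le_exp_logdetF:
  "1 + (norm (column j Z))\<^sup>2 \<le> exp (logdetF Z)"
proof -
  have "1 + (norm (column j Z))\<^sup>2 \<le> gram_det (stack_columns Z)"
    using gram_det_stack_keep_columns_le[of "{j}" Z] by (simp only: gram_det_stack_single_column)
  moreover have "0 < gram_det (stack_columns Z)"
    using gram_det_stack_columns_ge_one[of Z] by linarith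
  ultimately show ?thesis
    by (simp add: logdetF_eq_ln_gram_det)
qed

lemma norm_sq_le_card_exp_logdetF:
  fixes Z :: "real^'n^'n"
  shows "(norm Z)\<^sup>2 \<le> real CARD('n) * exp (logdetF Z)"
proof -
  have "(norm Z)\<^sup>2 = (\<Sum>j\<in>UNIV. (norm (column j Z))\<^sup>2)"
    unfolding power2_norm_eq_inner inner_vec_def column_def inner_real_def vec_lambda_beta
    by (rule sum.swap)
  also have "\<dots> \<le> (\<Sum>j\<in>(UNIV :: 'n set). exp (logdetF Z))"
  proof (rule sum_mono)
    fix j
    show "(norm (column j Z))\<^sup>2 \<le> exp (logdetF Z)"
      using one_add_norm_column_sq_le_exp_logdetF[of j Z] by linarith
  qed
  finally show ?thesis by simp
qed

lemma logdetF_change_column: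
  fixes Z Z' :: "real^'n^'n"
  assumes "\<And>c. c \<noteq> j \<Longrightarrow> column c Z' = column c Z"
  shows "logdetF Z' \<le> logdetF Z + 2 * norm (column j Z' - column j Z)"
proof -
  define w where "w = column j Z' - column j Z"
  have pos: "0 < gram_det (stack_columns Z)" "0 < gram_det (stack_columns Z')"
    using gram_det_stack_columns_ge_one[of Z] gram_det_stack_columns_ge_one[of Z'] by linarith+
  have "gram_det (stack_columns Z') \<le> (1 + norm w)\<^sup>2 * gram_det (stack_columns Z)"
    unfolding w_def by (rule gram_det_stack_change_column) (rule assms)
  then have "logdetF Z' \<le> ln ((1 + norm w)\<^sup>2 * gram_det (stack_columns Z))"
    unfolding logdetF_eq_ln_gram_det using pos(2) by (rule ln_mono)
  also have "\<dots> = 2 * ln (1 + norm w) + logdetF Z"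
    using pos add_pos_nonneg[OF zero_less_one norm_ge_zero, of w]
    by (simp add: ln_mult ln_realpow logdetF_eq_ln_gram_det)
  also have "ln (1 + norm w) \<le> norm w"
    by (simp add: ln_add_one_self_le_self)
  finally show ?thesis unfolding w_def by simp
qed

lemma norm_column_le: "norm (column c A) \<le> norm (A :: real^'n^'m)"
  by (rule norm_le_componentwise_cart) (simp add: column_def component_le_norm_cart)

lemma logdetF_lipschitz:
  fixes Z Z' :: "real^'n^'n"
  shows "logdetF Z' \<le> logdetF Z + 2 * real CARD('n) * norm (Z' - Z)"
proof -
  have "logdetF (Z + keep_columns S E) \<le> logdetF Z + 2 * (\<Sum>c\<in>S. norm (column c E))"
    if "finite S" for S and E :: "real^'n^'n"
    using that
  proof (induction S rule: finite_induct)
    case empty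
    have "keep_columns {} E = 0" by (simp add: keep_columns_def vec_eq_iff)
    then show ?case by simp
  next
    case (insert x S)
    have "column x (Z + keep_columns (insert x S) E) - column x (Z + keep_columns S E) = column x E"
      "\<And>c. c \<noteq> x \<Longrightarrow> column c (Z + keep_columns (insert x S) E) = column c (Z + keep_columns S E)"
      using insert.hyps(2) by (auto simp: column_def keep_columns_def vec_eq_iff)
    with logdetF_change_column[of x "Z + keep_columns (insert x S) E" "Z + keep_columns S E"]
    show ?case using insert by simp
  qed
  from this[of UNIV "Z' - Z"]
  have "logdetF Z' \<le> logdetF Z + 2 * (\<Sum>c\<in>UNIV. norm (column c (Z' - Z)))"
    by simp
  also have "(\<Sum>c\<in>UNIV. norm (column c (Z' - Z))) \<le> (\<Sum>c\<in>(UNIV :: 'n set). norm (Z' - Z))"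
    by (intro sum_mono norm_column_le)
  finally show ?thesis by simp
qed

lemma frob_norm_eq_norm: "frob_norm A = norm A"
  unfolding frob_norm_def norm_vec_def L2_set_def by (simp add: sum_nonneg power2_abs)

lemma trace_transpose_mult_eq_inner: "trace (transpose A ** B) = A \<bullet> (B :: real^'n^'m)"
  unfolding trace_def inner_vec_def matrix_matrix_mult_def transpose_def
  by simp (rule sum.swap)

lemma inner_matrix_mult_right:
  fixes A :: "real^'n^'m" and X :: "real^'k^'m" and D :: "real^'n^'k"
  shows "A \<bullet> (X ** D) = (transpose X ** A) \<bullet> D"
proof -
  have "A \<bullet> (X ** D) = trace ((transpose A ** X) ** D)"
    by (simp only: trace_transpose_mult_eq_inner[symmetric] matrix_mul_assoc)
  also have "\<dots> = (transpose X ** A) \<bullet> D"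
    by (simp only: trace_transpose_mult_eq_inner[symmetric] matrix_transpose_mul transpose_transpose)
  finally show ?thesis .
qed

lemma augL_eq:
  "augL \<rho> X Z W Y \<beta> = logdetF Z + \<rho> * (norm (X - X ** W))\<^sup>2
     + \<beta> / 2 * (norm (Z - W))\<^sup>2 + Y \<bullet> (Z - W)"
  unfolding augL_def frob_norm_eq_norm trace_transpose_mult_eq_inner ..

lemma complete_square_inner:
  fixes a Y :: "'a::real_inner"
  assumes "b > 0"
  shows "b / 2 * (norm a)\<^sup>2 + Y \<bullet> a = b / 2 * (norm (a + (1 / b) *\<^sub>R Y))\<^sup>2 - (norm Y)\<^sup>2 / (2 * b)"
proof -
  have "(norm (a + (1 / b) *\<^sub>R Y))\<^sup>2 = (norm a)\<^sup>2 + 2 * (1 / b) * (Y \<bullet> a) + (1 / b)\<^sup>2 * (norm Y)\<^sup>2"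
    unfolding power2_norm_eq_inner
    by (simp add: inner_add_left inner_add_right inner_commute power2_eq_square algebra_simps)
  then show ?thesis
    using assms by (simp add: field_simps power2_eq_square)
qed

lemma prox_multiplier_bound:
  fixes Z W Y :: "'a::real_inner"
  assumes "b > 0" and "0 \<le> K"
    and lipschitz: "\<And>A B. f A \<le> f B + K * norm (A - B)"
    and minimal: "\<And>Z'. f Z + b / 2 * (norm (Z - W))\<^sup>2 + Y \<bullet> (Z - W)
                    \<le> f Z' + b / 2 * (norm (Z' - W))\<^sup>2 + Y \<bullet> (Z' - W)"
  shows "norm (Y + b *\<^sub>R (Z - W)) \<le> 2 * K"
proof -
  \<comment> \<open>\<open>C\<close> minimises the quadratic part; the Lipschitz bound then leaves \<open>b/2 r\<^sup>2 \<le> K r\<close>.\<close>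
  define C where "C = W - (1 / b) *\<^sub>R Y"
  define r where "r = norm (Z - C)"
  have "f Z + b / 2 * r\<^sup>2 \<le> f C"
    using minimal[of C] complete_square_inner[OF \<open>b > 0\<close>, of "Z - W" Y]
      complete_square_inner[OF \<open>b > 0\<close>, of "C - W" Y]
    unfolding r_def C_def by (simp add: algebra_simps)
  moreover have "f C \<le> f Z + K * r"
    using lipschitz[of C Z] unfolding r_def by (simp add: norm_minus_commute)
  ultimately have "b / 2 * r\<^sup>2 \<le> K * r" by linarith
  then have "b * r \<le> 2 * K"
    using \<open>0 \<le> K\<close> by (cases "r = 0") (auto simp: power2_eq_square r_def)
  moreover have "Y + b *\<^sub>R (Z - W) = b *\<^sub>R (Z - C)"
    using \<open>b > 0\<close> unfolding C_def by (simp add: algebra_simps)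
  ultimately show ?thesis
    using \<open>b > 0\<close> unfolding r_def by simp
qed

lemma augL_multiplier_update:
  assumes "\<beta> > 0" and "Y' = Y + \<beta> *\<^sub>R (Z - W)"
  shows "augL \<rho> X Z W Y' \<beta>' = augL \<rho> X Z W Y \<beta> + (norm (Y' - Y))\<^sup>2 * (\<beta>' / (2 * \<beta>\<^sup>2) + 1 / (2 * \<beta>))"
proof -
  define N where "N = (norm (Y' - Y))\<^sup>2"
  have ZW: "Z - W = (1 / \<beta>) *\<^sub>R (Y' - Y)"
    using assms by simp
  have "augL \<rho> X Z W Y' \<beta>' - augL \<rho> X Z W Y \<beta>
      = (\<beta>' - \<beta>) / 2 * (norm (Z - W))\<^sup>2 + (Y' - Y) \<bullet> (Z - W)"
    unfolding augL_eq by (simp add: inner_diff_left field_simps)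
  also have "\<dots> = (\<beta>' - \<beta>) / 2 * (N / \<beta>\<^sup>2) + N / \<beta>"
    using assms(1) unfolding ZW N_def by (simp add: power_mult_distrib power2_norm_eq_inner power_divide)
  also have "\<dots> = N * (\<beta>' / (2 * \<beta>\<^sup>2) + 1 / (2 * \<beta>))"
    using assms(1) by (simp add: field_simps power2_eq_square)
  finally show ?thesis unfolding N_def by simp
qed

lemma logdetF_le_augL:
  assumes "0 \<le> \<rho>" and "\<beta> > 0"
  shows "logdetF Z \<le> augL \<rho> X Z W Y \<beta> + (norm Y)\<^sup>2 / (2 * \<beta>)"
proof -
  have "- (norm Y)\<^sup>2 / (2 * \<beta>) \<le> \<beta> / 2 * (norm (Z - W))\<^sup>2 + Y \<bullet> (Z - W)"
    using complete_square_inner[OF \<open>\<beta> > 0\<close>, of "Z - W" Y] \<open>\<beta> > 0\<close> by simp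
  moreover have "0 \<le> \<rho> * (norm (X - X ** W))\<^sup>2"
    using \<open>0 \<le> \<rho>\<close> by simp
  ultimately show ?thesis
    unfolding augL_eq by linarith
qed

lemma matrix_add_rdistrib: "(A + B) ** C = A ** C + B ** (C :: 'a::semiring_1^'k^'m)"
  by (simp add: matrix_matrix_mult_def vec_eq_iff sum.distrib distrib_right)

lemma matrix_diff_ldistrib: "A ** (B - C) = A ** B - A ** (C :: 'a::ring_1^'k^'m)"
  by (metis add_diff_cancel_right' diff_add_cancel matrix_add_ldistrib)

lemma invertible_scaleR_id_add_gram:
  fixes X :: "real^'n^'d"
  assumes "\<beta> > 0" and "0 \<le> c"
  shows "invertible (\<beta> *\<^sub>R mat 1 + c *\<^sub>R (transpose X ** X))"
proof -
  let ?M = "\<beta> *\<^sub>R mat 1 + c *\<^sub>R (transpose X ** X)"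
  have "x = 0" if "?M *v x = 0" for x
  proof -
    have "x \<bullet> (transpose X *v (X *v x)) = (X *v x) \<bullet> (X *v x)"
      by (metis inner_commute dot_lmul_matrix transpose_matrix_vector)
    then have "x \<bullet> (?M *v x) = \<beta> * (x \<bullet> x) + c * ((X *v x) \<bullet> (X *v x))"
      by (simp add: matrix_vector_mult_add_rdistrib scaleR_matrix_vector_assoc[symmetric]
          matrix_vector_mul_assoc[symmetric] inner_add_right dot_lmul_matrix inner_commute
          del: transpose_matrix_vector)
    then have "\<beta> * (x \<bullet> x) \<le> 0"
      using that \<open>0 \<le> c\<close> by (smt (verit) inner_ge_zero inner_zero_right mult_nonneg_nonneg)
    then have "x \<bullet> x \<le> 0"
      using \<open>\<beta> > 0\<close> by (simp add: mult_le_0_iff)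
    then show "x = 0"
      by (metis inner_eq_zero_iff inner_ge_zero order_antisym)
  qed
  then show ?thesis
    using matrix_left_invertible_ker invertible_left_inverse by blast
qed

lemma matrix_mult_matrix_inv: "invertible A \<Longrightarrow> A ** matrix_inv A = mat 1"
  unfolding invertible_def matrix_inv_def by (rule someI2_ex) auto

lemma augL_le_of_normal_equation:
  fixes X :: "real^'n^'d" and Z W W' Y :: "real^'n^'n"
  assumes "0 \<le> \<rho>" and "0 \<le> \<beta>"
    and normal: "(2 * \<rho>) *\<^sub>R (transpose X ** (X - X ** W')) + \<beta> *\<^sub>R (Z - W') + Y = 0"
  shows "augL \<rho> X Z W' Y \<beta> \<le> augL \<rho> X Z W Y \<beta>"
proof -
  define D where "D = W - W'"
  define E where "E = X - X ** W'"
  have residuals: "X - X ** W = E - X ** D" "Z - W = (Z - W') - D"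
    unfolding E_def D_def by (simp_all add: matrix_diff_ldistrib)
  have expand: "\<rho> * (norm (E - X ** D))\<^sup>2
      = \<rho> * (norm E)\<^sup>2 - 2 * \<rho> * (E \<bullet> (X ** D)) + \<rho> * (norm (X ** D))\<^sup>2"
    "\<beta> / 2 * (norm ((Z - W') - D))\<^sup>2
      = \<beta> / 2 * (norm (Z - W'))\<^sup>2 - \<beta> * ((Z - W') \<bullet> D) + \<beta> / 2 * (norm D)\<^sup>2"
    by (simp_all add: power2_norm_eq_inner inner_diff_left inner_diff_right inner_commute algebra_simps)
  have "2 * \<rho> * (E \<bullet> (X ** D)) + \<beta> * ((Z - W') \<bullet> D) + Y \<bullet> D = 0"
    using arg_cong[where f = "\<lambda>M. M \<bullet> D", OF normal]
    by (simp add: inner_matrix_mult_right inner_add_left E_def)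
  moreover have "0 \<le> \<rho> * (norm (X ** D))\<^sup>2" "0 \<le> \<beta> / 2 * (norm D)\<^sup>2"
    using assms by simp_all
  ultimately show ?thesis
    unfolding augL_eq E_def[symmetric] residuals expand inner_diff_right by linarith
qed

lemma augL_le_of_W_update:
  fixes X :: "real^'n^'d" and Z W Y :: "real^'n^'n"
  assumes "0 < \<rho>" and "0 < \<beta>"
    and "W' = matrix_inv (\<beta> *\<^sub>R mat 1 + (2 * \<rho>) *\<^sub>R (transpose X ** X))
        ** ((2 * \<rho>) *\<^sub>R (transpose X ** X) + Y + \<beta> *\<^sub>R Z)"
  shows "augL \<rho> X Z W' Y \<beta> \<le> augL \<rho> X Z W Y \<beta>"
proof (rule augL_le_of_normal_equation)
  let ?M = "\<beta> *\<^sub>R mat 1 + (2 * \<rho>) *\<^sub>R (transpose X ** X)"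
  let ?T = "transpose X ** X"
  have "?M ** W' = (2 * \<rho>) *\<^sub>R ?T + Y + \<beta> *\<^sub>R Z"
    unfolding assms(3) matrix_mul_assoc
    using matrix_mult_matrix_inv[OF invertible_scaleR_id_add_gram[of \<beta> "2 * \<rho>" X]] assms(1,2)
    by simp
  moreover have "?M ** W' = \<beta> *\<^sub>R W' + (2 * \<rho>) *\<^sub>R (?T ** W')"
    by (simp only: matrix_add_rdistrib scalar_matrix_assoc[symmetric] matrix_mul_lid)
  ultimately have normal: "((2 * \<rho>) *\<^sub>R ?T + Y + \<beta> *\<^sub>R Z) - (\<beta> *\<^sub>R W' + (2 * \<rho>) *\<^sub>R (?T ** W')) = 0"
    by simp
  have "transpose X ** (X - X ** W') = ?T - ?T ** W'"
    by (simp only: matrix_diff_ldistrib matrix_mul_assoc)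
  then have "(2 * \<rho>) *\<^sub>R (transpose X ** (X - X ** W')) + \<beta> *\<^sub>R (Z - W') + Y
      = ((2 * \<rho>) *\<^sub>R ?T + Y + \<beta> *\<^sub>R Z) - (\<beta> *\<^sub>R W' + (2 * \<rho>) *\<^sub>R (?T ** W'))"
    by (simp only:) (simp add: algebra_simps)
  also note normal
  finally show "(2 * \<rho>) *\<^sub>R (transpose X ** (X - X ** W')) + \<beta> *\<^sub>R (Z - W') + Y = 0" .
qed (use assms in auto)

lemma le_of_summable_increments:
  fixes u a :: "nat \<Rightarrow> real"
  assumes "\<And>k. u (Suc k) \<le> u k + a k" and "summable a" and "\<And>k. 0 \<le> a k"
  shows "u k \<le> u 0 + suminf a"
proof -
  have "u k \<le> u 0 + sum a {..<k}"
  proof (induction k)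
    case (Suc k)
    then show ?case using assms(1)[of k] by simp
  qed simp
  also have "sum a {..<k} \<le> suminf a"
    by (rule sum_le_suminf) (use assms(2,3) in auto)
  finally show ?thesis by simp
qed

locale logdet_admm =
  fixes X :: "real^'n^'d"
    and \<rho> :: real
    and \<beta> :: "nat \<Rightarrow> real"
    and Z W Y :: "nat \<Rightarrow> real^'n^'n"
  assumes rho_pos: "\<rho> > 0"
    and beta_pos: "\<And>k. \<beta> k > 0"
    and summable_beta_ratio: "summable (\<lambda>k. \<beta> (Suc k) / (\<beta> k)\<^sup>2)"
    and summable_inverse_beta: "summable (\<lambda>k. 1 / \<beta> k)"
    and Y_0: "Y 0 = 0"
    and W_update: "\<And>k. W (Suc k) =
        matrix_inv (\<beta> k *\<^sub>R mat 1 + (2 * \<rho>) *\<^sub>R (transpose X ** X))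
        ** ((2 * \<rho>) *\<^sub>R (transpose X ** X) + Y k + \<beta> k *\<^sub>R Z k)"
    and Z_update: "\<And>k Z'. augL \<rho> X (Z (Suc k)) (W (Suc k)) (Y k) (\<beta> k)
                       \<le> augL \<rho> X Z' (W (Suc k)) (Y k) (\<beta> k)"
    and Y_update: "\<And>k. Y (Suc k) = Y k + \<beta> k *\<^sub>R (Z (Suc k) - W (Suc k))"
begin

definition augL_seq :: "nat \<Rightarrow> real" where
  "augL_seq k = augL \<rho> X (Z k) (W k) (Y k) (\<beta> k)"

lemma inverse_beta_le_suminf: "1 / \<beta> k \<le> (\<Sum>i. 1 / \<beta> i)"
  using sum_le_suminf[OF summable_inverse_beta, of "{k}"] beta_pos by (simp add: less_imp_le)

lemma norm_Y_le: "norm (Y k) \<le> 4 * real CARD('n)"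
proof (cases k)
  case 0
  then show ?thesis using Y_0 by simp
next
  case (Suc i)
  have "norm (Y i + \<beta> i *\<^sub>R (Z (Suc i) - W (Suc i))) \<le> 2 * (2 * real CARD('n))"
  proof (rule prox_multiplier_bound[where f = logdetF])
    show "logdetF A \<le> logdetF B + 2 * real CARD('n) * norm (A - B)" for A B :: "real^'n^'n"
      by (rule logdetF_lipschitz)
    show "logdetF (Z (Suc i)) + \<beta> i / 2 * (norm (Z (Suc i) - W (Suc i)))\<^sup>2 + Y i \<bullet> (Z (Suc i) - W (Suc i))
        \<le> logdetF Z' + \<beta> i / 2 * (norm (Z' - W (Suc i)))\<^sup>2 + Y i \<bullet> (Z' - W (Suc i))" for Z'
      using Z_update[of i Z'] unfolding augL_eq by linarith
  qed (use beta_pos in auto)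
  then show ?thesis
    using Suc Y_update by simp
qed

lemma augL_seq_Suc_le:
  "augL_seq (Suc k) \<le> augL_seq k + 32 * (real CARD('n))\<^sup>2 * (\<beta> (Suc k) / (\<beta> k)\<^sup>2 + 1 / \<beta> k)"
proof -
  define c where "c = \<beta> (Suc k) / (2 * (\<beta> k)\<^sup>2) + 1 / (2 * \<beta> k)"
  have c_nonneg: "0 \<le> c"
    unfolding c_def using beta_pos[of k] beta_pos[of "Suc k"] by simp
  have "augL_seq (Suc k)
      = augL \<rho> X (Z (Suc k)) (W (Suc k)) (Y k) (\<beta> k) + (norm (Y (Suc k) - Y k))\<^sup>2 * c"
    unfolding augL_seq_def c_def by (rule augL_multiplier_update[OF beta_pos Y_update])
  moreover have "augL \<rho> X (Z (Suc k)) (W (Suc k)) (Y k) (\<beta> k) \<le> augL_seq k"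
    using Z_update[of k "Z k"] augL_le_of_W_update[OF rho_pos beta_pos W_update, of k "W k"]
    unfolding augL_seq_def by linarith
  moreover have "(norm (Y (Suc k) - Y k))\<^sup>2 * c \<le> (8 * real CARD('n))\<^sup>2 * c"
  proof (intro mult_right_mono power_mono c_nonneg)
    show "norm (Y (Suc k) - Y k) \<le> 8 * real CARD('n)"
      using norm_triangle_ineq4[of "Y (Suc k)" "Y k"] norm_Y_le[of k] norm_Y_le[of "Suc k"] by simp
  qed simp
  moreover have "(8 * real CARD('n))\<^sup>2 * c = 32 * (real CARD('n))\<^sup>2 * (\<beta> (Suc k) / (\<beta> k)\<^sup>2 + 1 / \<beta> k)"
    unfolding c_def by (simp add: field_simps power2_eq_square)
  ultimately show ?thesis by linarith
qed

lemma augL_seq_bounded_above: "\<exists>B. \<forall>k. augL_seq k \<le> B"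
proof -
  let ?a = "\<lambda>k. 32 * (real CARD('n))\<^sup>2 * (\<beta> (Suc k) / (\<beta> k)\<^sup>2 + 1 / \<beta> k)"
  have "summable ?a"
    by (intro summable_mult summable_add summable_beta_ratio summable_inverse_beta)
  moreover have "0 \<le> ?a k" for k
    using beta_pos[of k] beta_pos[of "Suc k"] by simp
  ultimately show ?thesis
    using le_of_summable_increments[of augL_seq ?a] augL_seq_Suc_le by blast
qed

lemma logdetF_Z_bounded_above: "\<exists>B. \<forall>k. logdetF (Z k) \<le> B"
proof -
  obtain B where B: "augL_seq k \<le> B" for k
    using augL_seq_bounded_above by blast
  have "logdetF (Z k) \<le> B + 8 * (real CARD('n))\<^sup>2 * (\<Sum>i. 1 / \<beta> i)" for k
  proof -
    have "logdetF (Z k) \<le> augL_seq k + (norm (Y k))\<^sup>2 / (2 * \<beta> k)"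
      unfolding augL_seq_def using rho_pos beta_pos by (intro logdetF_le_augL) (auto intro: less_imp_le)
    moreover have "(norm (Y k))\<^sup>2 / (2 * \<beta> k) \<le> (4 * real CARD('n))\<^sup>2 / (2 * \<beta> k)"
      using norm_Y_le[of k] beta_pos[of k] by (intro divide_right_mono power_mono) simp_all
    moreover have "(4 * real CARD('n))\<^sup>2 / (2 * \<beta> k) = 8 * (real CARD('n))\<^sup>2 * (1 / \<beta> k)"
      using beta_pos[of k] by (simp add: power2_eq_square)
    moreover have "8 * (real CARD('n))\<^sup>2 * (1 / \<beta> k) \<le> 8 * (real CARD('n))\<^sup>2 * (\<Sum>i. 1 / \<beta> i)"
      using inverse_beta_le_suminf[of k] by (intro mult_left_mono) simp_all
    ultimately show ?thesis using B[of k] by linarith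
  qed
  then show ?thesis by blast
qed

lemma bounded_range_Z: "bounded (range Z)"
proof -
  obtain B where "logdetF (Z k) \<le> B" for k
    using logdetF_Z_bounded_above by blast
  then have "(norm (Z k))\<^sup>2 \<le> real CARD('n) * exp B" for k
    using norm_sq_le_card_exp_logdetF[of "Z k"] by (smt (verit) exp_le_cancel_iff mult_left_mono of_nat_0_le_iff)
  then have "norm (Z k) \<le> sqrt (real CARD('n) * exp B)" for k
    by (simp add: real_le_rsqrt)
  then show ?thesis
    unfolding bounded_iff by blast
qed

lemma bounded_range_W: "bounded (range W)"
proof -
  obtain C where C: "norm (Z k) \<le> C" for k
    using bounded_range_Z unfolding bounded_iff by blast
  have "norm (W (Suc k)) \<le> C + (\<Sum>i. 1 / \<beta> i) * (8 * real CARD('n))" for k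
  proof -
    have "W (Suc k) = Z (Suc k) - (1 / \<beta> k) *\<^sub>R (Y (Suc k) - Y k)"
      using beta_pos[of k] by (simp add: Y_update)
    then have "norm (W (Suc k)) \<le> norm (Z (Suc k)) + 1 / \<beta> k * norm (Y (Suc k) - Y k)"
      using norm_triangle_ineq4[of "Z (Suc k)" "(1 / \<beta> k) *\<^sub>R (Y (Suc k) - Y k)"] beta_pos[of k]
      by simp
    moreover have "1 / \<beta> k * norm (Y (Suc k) - Y k) \<le> (\<Sum>i. 1 / \<beta> i) * (8 * real CARD('n))"
    proof (rule mult_mono)
      show "norm (Y (Suc k) - Y k) \<le> 8 * real CARD('n)"
        using norm_triangle_ineq4[of "Y (Suc k)" "Y k"] norm_Y_le[of k] norm_Y_le[of "Suc k"] by simp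
      show "0 \<le> (\<Sum>i. 1 / \<beta> i)"
        using beta_pos by (intro suminf_nonneg summable_inverse_beta) (simp add: less_imp_le)
    qed (use inverse_beta_le_suminf in auto)
    ultimately show ?thesis using C[of "Suc k"] by linarith
  qed
  then have "norm (W k) \<le> max (norm (W 0)) (C + (\<Sum>i. 1 / \<beta> i) * (8 * real CARD('n)))" for k
    by (cases k) (auto simp: le_max_iff_disj)
  then show ?thesis
    unfolding bounded_iff by blast
qed

end

theorem lemma2:
  fixes X :: "real^'n^'d"
    and \<rho> :: real
    and \<beta> :: "nat \<Rightarrow> real"
    and Z W Y :: "nat \<Rightarrow> real^'n^'n"
  assumes rho_pos: "\<rho> > 0"
    and beta_pos: "\<And>k. \<beta> k > 0"
    and sum1: "summable (\<lambda>k. \<beta> (Suc k) / (\<beta> k)^2)"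
    and sum2: "summable (\<lambda>k. 1 / \<beta> k)"
    and Y0: "Y 0 = 0"
    and W_step: "\<And>k. W (Suc k) =
        matrix_inv (\<beta> k *\<^sub>R mat 1 + (2 * \<rho>) *\<^sub>R (transpose X ** X))
        ** ((2 * \<rho>) *\<^sub>R (transpose X ** X) + Y k + \<beta> k *\<^sub>R Z k)"
    and Z_step: "\<And>k Z'. augL \<rho> X (Z (Suc k)) (W (Suc k)) (Y k) (\<beta> k)
                       \<le> augL \<rho> X Z' (W (Suc k)) (Y k) (\<beta> k)"
    and Y_step: "\<And>k. Y (Suc k) = Y k + \<beta> k *\<^sub>R (Z (Suc k) - W (Suc k))"
  shows "bounded (range W) \<and> bounded (range Z)"
proof -
  interpret logdet_admm X \<rho> \<beta> Z W Y
    by unfold_locales (fact assms)+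
  show ?thesis
    using bounded_range_W bounded_range_Z ..
qed

end
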